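(* Consider $\tau=t^3$ on Minkowski space $\mathbb{M}^{n+1}=(\mathbb{R}\times\mathbb{R}^n,-dt^2+\sum_i(dx^i)^2)$. Then: (1) $\hat{d}_\tau$ fails to be definite; in particular, for any two points $p,q$ in the slice $\{t=0\}$, $\hat{d}_\tau(p,q)=0$; (2) $\hat{d}_\tau$ fails to encode the causal structure; in particular, for any two points $p=(t_p,p_S)$ and $q=(t_q,q_S)$ with $t_p<0<t_q$, we have $\hat{d}_\tau(p,q)=\tau(q)-\tau(p)$.
   Context: Minkowski space is time-oriented by $\partial_t$; $\tau=t^3$ is strictly increasing along future causal curves. A piecewise causal curve $\beta:[a,b]\to M$ has a partition $a=s_0<\dots<s_k=b$ with each restriction a smooth future or past causal curve (all tangents, including one-sided ones, future or past pointing causal); its null length is $\hat{L}_\tau(\beta)=\sum_i|\tau(\beta(s_i))-\tau(\beta(s_{i-1}))|$, and $\hat{d}_\tau(p,q)=\inf\{\hat{L}_\tau(\beta):\beta$ piecewise causal from $p$ to $q\}$. *)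

theory Defs
  imports "HOL-Analysis.Analysis"
begin

text \<open>Minkowski space M^{n+1} = R x R^n, points (t, x); the spatial factor is real^'n
  for an arbitrary finite index type 'n (so n = CARD('n) >= 1).\<close>

type_synonym 'n mpoint = "real \<times> (real ^ 'n)"

definition tau :: "('n::finite) mpoint \<Rightarrow> real" where
  "tau p = (fst p) ^ 3"

definition future_causal :: "('n::finite) mpoint \<Rightarrow> bool" where
  "future_causal v \<longleftrightarrow> v \<noteq> 0 \<and> norm (snd v) ^ 2 - (fst v) ^ 2 \<le> 0 \<and> fst v > 0"

definition past_causal :: "('n::finite) mpoint \<Rightarrow> bool" where
  "past_causal v \<longleftrightarrow> v \<noteq> 0 \<and> norm (snd v) ^ 2 - (fst v) ^ 2 \<le> 0 \<and> fst v < 0"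

definition smooth_on_cl :: "(real \<Rightarrow> 'v::real_normed_vector) \<Rightarrow> real \<Rightarrow> real \<Rightarrow> (nat \<Rightarrow> real \<Rightarrow> 'v) \<Rightarrow> bool" where
  "smooth_on_cl f a b D \<longleftrightarrow>
     (\<forall>t\<in>{a..b}. D 0 t = f t) \<and>
     (\<forall>k. \<forall>t\<in>{a..b}. (D k has_vector_derivative D (Suc k) t) (at t within {a..b}))"

definition smooth_causal_piece :: "(real \<Rightarrow> ('n::finite) mpoint) \<Rightarrow> real \<Rightarrow> real \<Rightarrow> bool" where
  "smooth_causal_piece \<beta> a b \<longleftrightarrow>
     (\<exists>D. smooth_on_cl \<beta> a b D \<and>
        ((\<forall>t\<in>{a..b}. future_causal (D 1 t)) \<or> (\<forall>t\<in>{a..b}. past_causal (D 1 t))))"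

definition piecewise_causal ::
  "(real \<Rightarrow> ('n::finite) mpoint) \<Rightarrow> real \<Rightarrow> real \<Rightarrow> nat \<Rightarrow> (nat \<Rightarrow> real) \<Rightarrow> bool" where
  "piecewise_causal \<beta> a b k s \<longleftrightarrow>
     k \<ge> 1 \<and> s 0 = a \<and> s k = b \<and> (\<forall>i<k. s i < s (Suc i)) \<and>
     (\<forall>i<k. smooth_causal_piece \<beta> (s i) (s (Suc i)))"

definition null_length :: "(real \<Rightarrow> ('n::finite) mpoint) \<Rightarrow> nat \<Rightarrow> (nat \<Rightarrow> real) \<Rightarrow> real" where
  "null_length \<beta> k s = (\<Sum>i<k. \<bar>tau (\<beta> (s (Suc i))) - tau (\<beta> (s i))\<bar>)"

definition d_hat :: "('n::finite) mpoint \<Rightarrow> 'n mpoint \<Rightarrow> real" where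
  "d_hat p q = Inf {null_length \<beta> k s | \<beta> a b k s.
      piecewise_causal \<beta> a b k s \<and> \<beta> a = p \<and> \<beta> b = q}"

end

theory Submission
  imports Defs
begin

text \<open>Every piecewise causal curve has null length at least \<open>\<tau>(q) - \<tau>(p)\<close>, by telescoping,
  and at least 0. Conversely, a zigzag of \<open>2N\<close> causal segments between two points of
  \<open>{t = 0}\<close>, alternating between the slices \<open>t = 0\<close> and \<open>t = h\<close> with \<open>h \<sim> 1/N\<close>, has null length
  \<open>2N h\<^sup>3 \<sim> 1/N\<^sup>2\<close>, which tends to 0. Going vertically from \<open>p\<close> up to \<open>t = 0\<close>,
  zigzagging there and going vertically up to \<open>q\<close> realises \<open>\<tau>(q) - \<tau>(p)\<close> up to arbitrarily
  small error.\<close>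

lemma real_Inf_eq_approx:
  fixes S :: "real set"
  assumes "\<And>x. x \<in> S \<Longrightarrow> L \<le> x" and "\<And>e. e > 0 \<Longrightarrow> \<exists>x\<in>S. x < L + e"
  shows "Inf S = L"
proof (rule cInf_eq)
  fix y assume lower: "\<And>x. x \<in> S \<Longrightarrow> y \<le> x"
  show "y \<le> L"
  proof (rule field_le_epsilon)
    fix e :: real assume "e > 0"
    then obtain x where "x \<in> S" "x < L + e"
      using assms(2) by blast
    with lower show "y \<le> L + e"
      by fastforce
  qed
qed (fact assms(1))

definition causal_chain :: "(nat \<Rightarrow> ('n::finite) mpoint) \<Rightarrow> nat \<Rightarrow> bool" where
  "causal_chain v k \<longleftrightarrow>
     (\<forall>i<k. future_causal (v (Suc i) - v i) \<or> past_causal (v (Suc i) - v i))"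

definition chain_length :: "(nat \<Rightarrow> ('n::finite) mpoint) \<Rightarrow> nat \<Rightarrow> real" where
  "chain_length v k = (\<Sum>i<k. \<bar>tau (v (Suc i)) - tau (v i)\<bar>)"

definition polygon :: "(nat \<Rightarrow> ('n::finite) mpoint) \<Rightarrow> real \<Rightarrow> 'n mpoint" where
  "polygon v t = v (nat \<lfloor>t\<rfloor>) + (t - of_int \<lfloor>t\<rfloor>) *\<^sub>R (v (Suc (nat \<lfloor>t\<rfloor>)) - v (nat \<lfloor>t\<rfloor>))"

lemma polygon_of_nat [simp]: "polygon v (real i) = v i"
  by (simp add: polygon_def)

lemma polygon_on_segment:
  assumes "t \<in> {real i..real (Suc i)}"
  shows "polygon v t = v i + (t - real i) *\<^sub>R (v (Suc i) - v i)"
proof (cases "t = real (Suc i)")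
  case True
  then show ?thesis
    using polygon_of_nat[of v "Suc i"] by (simp add: algebra_simps)
next
  case False
  with assms have "\<lfloor>t\<rfloor> = int i"
    by (auto simp: floor_eq_iff)
  then show ?thesis
    by (simp add: polygon_def)
qed

lemma smooth_causal_piece_polygon:
  assumes "future_causal (v (Suc i) - v i) \<or> past_causal (v (Suc i) - v i)"
  shows "smooth_causal_piece (polygon v) (real i) (real (Suc i))"
proof -
  define D where "D = (\<lambda>(m::nat) (t::real).
    if m = 0 then v i + (t - real i) *\<^sub>R (v (Suc i) - v i)
    else if m = 1 then v (Suc i) - v i else 0)"
  have "smooth_on_cl (polygon v) (real i) (real (Suc i)) D"
    unfolding smooth_on_cl_def
  proof (intro conjI ballI allI)
    fix t assume "t \<in> {real i..real (Suc i)}"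
    then show "D 0 t = polygon v t"
      by (simp add: D_def polygon_on_segment)
  next
    fix m t
    show "(D m has_vector_derivative D (Suc m) t) (at t within {real i..real (Suc i)})"
      by (cases "m = 0") (auto simp: D_def intro!: derivative_eq_intros)
  qed
  moreover have "D 1 = (\<lambda>t. v (Suc i) - v i)"
    by (simp add: D_def)
  ultimately show ?thesis
    using assms unfolding smooth_causal_piece_def by auto
qed

definition null_lengths :: "('n::finite) mpoint \<Rightarrow> 'n mpoint \<Rightarrow> real set" where
  "null_lengths p q = {null_length \<beta> k s | \<beta> a b k s.
      piecewise_causal \<beta> a b k s \<and> \<beta> a = p \<and> \<beta> b = q}"

lemma d_hat_eq_Inf_null_lengths: "d_hat p q = Inf (null_lengths p q)"
  by (simp add: d_hat_def null_lengths_def)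

lemma chain_length_in_null_lengths:
  assumes "k \<ge> 1" and "causal_chain v k"
  shows "chain_length v k \<in> null_lengths (v 0) (v k)"
proof -
  have "piecewise_causal (polygon v) 0 (real k) k real"
    using assms smooth_causal_piece_polygon
    unfolding piecewise_causal_def causal_chain_def by auto
  moreover have "null_length (polygon v) k real = chain_length v k"
    unfolding null_length_def chain_length_def by (metis polygon_of_nat)
  moreover have "polygon v 0 = v 0" "polygon v (real k) = v k"
    using polygon_of_nat[of v 0] by simp_all
  ultimately have witness: "chain_length v k = null_length (polygon v) k real
      \<and> piecewise_causal (polygon v) 0 (real k) k real
      \<and> polygon v 0 = v 0 \<and> polygon v (real k) = v k"
    by simp
  then show ?thesis
    unfolding null_lengths_def by (intro CollectI exI) (rule witness)
qed

lemma null_lengths_nonneg: "x \<in> null_lengths p q \<Longrightarrow> 0 \<le> x"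
  unfolding null_lengths_def null_length_def by (auto intro!: sum_nonneg)

lemma null_lengths_ge_tau_diff: "x \<in> null_lengths p q \<Longrightarrow> tau q - tau p \<le> x"
proof -
  assume "x \<in> null_lengths p q"
  then obtain \<beta> a b k s where \<beta>: "piecewise_causal \<beta> a b k s" "\<beta> a = p" "\<beta> b = q"
    and x: "x = null_length \<beta> k s"
    unfolding null_lengths_def by blast
  have "tau q - tau p = (\<Sum>i<k. tau (\<beta> (s (Suc i))) - tau (\<beta> (s i)))"
    using \<beta> sum_lessThan_telescope[of "\<lambda>i. tau (\<beta> (s i))" k]
    by (simp add: piecewise_causal_def)
  also have "\<dots> \<le> x"
    unfolding x null_length_def by (rule order_trans[OF abs_ge_self sum_abs])
  finally show ?thesis .
qed

definition chain_append :: "(nat \<Rightarrow> 'a) \<Rightarrow> nat \<Rightarrow> (nat \<Rightarrow> 'a) \<Rightarrow> nat \<Rightarrow> 'a" where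
  "chain_append v k w i = (if i \<le> k then v i else w (i - k))"

lemma chain_append_end [simp]: "v k = w 0 \<Longrightarrow> chain_append v k w (k + m) = w m"
  by (simp add: chain_append_def)

lemma causal_chain_append:
  assumes "causal_chain v k" and "causal_chain w m" and "v k = w 0"
  shows "causal_chain (chain_append v k w) (k + m)"
  unfolding causal_chain_def
proof (intro allI impI)
  fix i assume i: "i < k + m"
  show "future_causal (chain_append v k w (Suc i) - chain_append v k w i) \<or>
        past_causal (chain_append v k w (Suc i) - chain_append v k w i)"
  proof (cases "i < k")
    case True
    then show ?thesis
      using assms(1) by (simp add: causal_chain_def chain_append_def)
  next
    case False
    then have "chain_append v k w (Suc i) = w (Suc (i - k))" "chain_append v k w i = w (i - k)"
      using assms(3) by (auto simp: chain_append_def Suc_diff_le)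
    then show ?thesis
      using assms(2) False i by (simp add: causal_chain_def)
  qed
qed

lemma chain_length_append:
  assumes "v k = w 0"
  shows "chain_length (chain_append v k w) (k + m) = chain_length v k + chain_length w m"
proof (induction m)
  case 0
  show ?case
    by (simp add: chain_length_def chain_append_def)
next
  case (Suc m)
  have "chain_append v k w (k + m) = w m"
    using assms by simp
  then show ?case
    using Suc by (simp add: chain_length_def chain_append_def Suc_diff_le)
qed

lemma future_causal_time_direction: "t > 0 \<Longrightarrow> future_causal (t, 0)"
  by (simp add: future_causal_def prod_eq_iff)

text \<open>The \<open>+ 1\<close> in the height keeps the steps nonzero (hence causal) when \<open>x = y\<close>.\<close>

definition zigzag_height :: "real ^ 'n \<Rightarrow> real ^ 'n \<Rightarrow> nat \<Rightarrow> real" where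
  "zigzag_height x y N = (norm (y - x) + 1) / (2 * real N)"

definition zigzag :: "real ^ 'n \<Rightarrow> real ^ 'n \<Rightarrow> nat \<Rightarrow> nat \<Rightarrow> ('n::finite) mpoint" where
  "zigzag x y N i =
     (if even i then 0 else zigzag_height x y N, x + (real i / (2 * real N)) *\<^sub>R (y - x))"

lemma zigzag_step:
  assumes "N \<ge> 1"
  shows "future_causal (zigzag x y N (Suc i) - zigzag x y N i) \<or>
         past_causal (zigzag x y N (Suc i) - zigzag x y N i)"
    and "\<bar>tau (zigzag x y N (Suc i)) - tau (zigzag x y N i)\<bar> = zigzag_height x y N ^ 3"
proof -
  define v where "v = zigzag x y N"
  define h where "h = zigzag_height x y N"
  have h_pos: "h > 0"
    using assms by (simp add: h_def zigzag_height_def add_nonneg_pos)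
  have "snd (v (Suc i) - v i) = (real (Suc i) / (2 * real N) - real i / (2 * real N)) *\<^sub>R (y - x)"
    by (simp add: v_def zigzag_def scaleR_diff_left)
  also have "\<dots> = (1 / (2 * real N)) *\<^sub>R (y - x)"
    by (simp add: diff_divide_distrib[symmetric])
  finally have "norm (snd (v (Suc i) - v i)) = norm (y - x) / (2 * real N)"
    using assms by simp
  also have "\<dots> \<le> h"
    using assms by (simp add: h_def zigzag_height_def divide_right_mono)
  finally have "norm (snd (v (Suc i) - v i)) ^ 2 \<le> h ^ 2"
    by (simp add: power_mono)
  then have "(future_causal (v (Suc i) - v i) \<or> past_causal (v (Suc i) - v i))
      \<and> \<bar>tau (v (Suc i)) - tau (v i)\<bar> = h ^ 3"
    using h_pos
    by (cases "even i") (auto simp: future_causal_def past_causal_def v_def zigzag_def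
        tau_def prod_eq_iff h_def)
  then show "future_causal (zigzag x y N (Suc i) - zigzag x y N i) \<or>
         past_causal (zigzag x y N (Suc i) - zigzag x y N i)"
    and "\<bar>tau (zigzag x y N (Suc i)) - tau (zigzag x y N i)\<bar> = zigzag_height x y N ^ 3"
    by (simp_all add: v_def h_def)
qed

lemma causal_chain_zigzag: "N \<ge> 1 \<Longrightarrow> causal_chain (zigzag x y N) (2 * N)"
  unfolding causal_chain_def using zigzag_step(1) by blast

lemma chain_length_zigzag:
  assumes "N \<ge> 1"
  shows "chain_length (zigzag x y N) (2 * N) = (norm (y - x) + 1) ^ 3 / (4 * real N ^ 2)"
proof -
  have "chain_length (zigzag x y N) (2 * N) = 2 * real N * zigzag_height x y N ^ 3"
    using zigzag_step(2)[OF assms, of x y] by (simp add: chain_length_def)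
  then show ?thesis
    using assms by (simp add: zigzag_height_def power_divide power3_eq_cube power2_eq_square)
qed

lemma zigzag_start: "zigzag x y N 0 = (0, x)"
  by (simp add: zigzag_def)

lemma zigzag_end: "N \<ge> 1 \<Longrightarrow> zigzag x y N (2 * N) = (0, y)"
  by (simp add: zigzag_def)

lemma exists_short_slice_chain:
  fixes x y :: "real ^ 'n::finite"
  assumes "e > 0"
  obtains v m where "m \<ge> 1" "causal_chain v m" "v 0 = (0, x)" "v m = (0, y)"
    "chain_length v m < e"
proof -
  define c where "c = (norm (y - x) + 1) ^ 3"
  obtain N :: nat where N: "max 1 (c / e) < real N"
    using reals_Archimedean2 by blast
  then have N1: "N \<ge> 1"
    by simp
  have "chain_length (zigzag x y N) (2 * N) = c / (4 * real N ^ 2)"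
    unfolding c_def by (rule chain_length_zigzag[OF N1])
  also have "\<dots> \<le> c / real N"
    using N1 by (intro divide_left_mono) (auto simp: c_def power2_eq_square)
  also have "\<dots> < e"
    using N assms by (simp add: field_simps)
  finally have "chain_length (zigzag x y N) (2 * N) < e" .
  moreover have "2 * N \<ge> 1"
    using N1 by simp
  ultimately show ?thesis
    using that causal_chain_zigzag[OF N1] zigzag_start zigzag_end[OF N1] by blast
qed

lemma d_hat_slice:
  fixes p q :: "('n::finite) mpoint"
  assumes "fst p = 0" and "fst q = 0"
  shows "d_hat p q = 0"
  unfolding d_hat_eq_Inf_null_lengths
proof (rule real_Inf_eq_approx)
  fix e :: real assume "e > 0"
  then obtain v m where "m \<ge> 1" "causal_chain v m" "v 0 = p" "v m = q" "chain_length v m < e"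
    using exists_short_slice_chain[of e "snd p" "snd q"] assms by (metis prod.collapse)
  then show "\<exists>x\<in>null_lengths p q. x < 0 + e"
    using chain_length_in_null_lengths by fastforce
qed (rule null_lengths_nonneg)

lemma d_hat_across_slice:
  fixes p q :: "('n::finite) mpoint"
  assumes p: "fst p < 0" and q: "0 < fst q"
  shows "d_hat p q = tau q - tau p"
  unfolding d_hat_eq_Inf_null_lengths
proof (rule real_Inf_eq_approx)
  fix e :: real assume "e > 0"
  then obtain v m where v: "m \<ge> 1" "causal_chain v m" "v 0 = (0, snd p)" "v m = (0, snd q)"
    "chain_length v m < e"
    by (rule exists_short_slice_chain)
  define down where "down = (\<lambda>i::nat. if i = 0 then p else (0, snd p))"
  define up where "up = (\<lambda>i::nat. if i = 0 then (0, snd q) else q)"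
  define u where "u = chain_append down 1 v"
  define w where "w = chain_append u (1 + m) up"
  have "(0, snd p) - p = (- fst p, 0)" "q - (0, snd q) = (fst q, 0)"
    by (simp_all add: prod_eq_iff)
  then have down: "causal_chain down 1" and up: "causal_chain up 1"
    using p q future_causal_time_direction[of "- fst p"] future_causal_time_direction[of "fst q"]
    unfolding down_def up_def causal_chain_def by auto
  have down_end: "down 1 = v 0" and u_end: "u (1 + m) = up 0"
    using v by (simp_all add: u_def down_def up_def chain_append_def)
  have "causal_chain u (1 + m)"
    unfolding u_def by (rule causal_chain_append[OF down v(2) down_end])
  then have "causal_chain w (1 + m + 1)"
    unfolding w_def using up u_end by (rule causal_chain_append)
  moreover have "chain_length w (1 + m + 1)
      = chain_length down 1 + chain_length v m + chain_length up 1"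
    using chain_length_append[of u "1 + m" up 1] chain_length_append[of down 1 v m]
      u_end down_end
    by (simp only: w_def u_def)
  moreover have "chain_length down 1 = - tau p" "chain_length up 1 = tau q"
    using p q by (simp_all add: chain_length_def down_def up_def tau_def odd_power_less_zero)
  moreover have "w 0 = p" "w (1 + m + 1) = q"
    by (simp_all add: w_def u_def down_def up_def chain_append_def)
  ultimately have "- tau p + chain_length v m + tau q \<in> null_lengths p q"
    using chain_length_in_null_lengths[of "1 + m + 1" w] by simp
  then show "\<exists>x\<in>null_lengths p q. x < tau q - tau p + e"
    using v(5) by (intro bexI[of _ "- tau p + chain_length v m + tau q"]) simp_all
qed (rule null_lengths_ge_tau_diff)

theorem proposition3p4:
  fixes p q :: "('n::finite) mpoint"
  shows "(fst p = 0 \<and> fst q = 0 \<longrightarrow> d_hat p q = 0)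
     \<and> (fst p < 0 \<and> 0 < fst q \<longrightarrow> d_hat p q = tau q - tau p)"
  using d_hat_slice d_hat_across_slice by blast

end
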